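(* Let $n$ be odd. Then there exist $p\in\mathcal{P}$ and a $2n$-cycle $\varphi\in G^*$ such that $\mathrm{Stab}_{G^*}(p)=\langle\varphi\rangle$ and $\mathrm{Rank}_{p(z)}(\varphi^n(z))=n$ for every $z\in I$.
   Context: Fix $n\ge 2$, $W=\{1,\dots,n\}$, $M=\{n+1,\dots,2n\}$, $I=W\cup M$. Permutations compose right-to-left. A preference profile is a function $p$ on $I$ assigning to each $x\in W$ a linear order $p(x)$ on $M$ and to each $y\in M$ a linear order $p(y)$ on $W$; $\mathcal{P}$ is the set of preference profiles. For a linear order $R$ on $X$ and $a\in X$, $\mathrm{Rank}_R(a)=|\{b\in X:b\succeq_R a\}|$. $G^*=\{\varphi\in\mathrm{Sym}(I):\{\varphi(W),\varphi(M)\}=\{W,M\}\}$. For a linear order $R$ on $X\subseteq I$ and $\varphi\in\mathrm{Sym}(I)$, $\varphi R$ is the relation on $\varphi(X)$ with $(a,b)\in\varphi R$ iff $(\varphi^{-1}(a),\varphi^{-1}(b))\in R$. For $\varphi\in G^*$, $p^\varphi(z)=\varphi\,p(\varphi^{-1}(z))$, and $\mathrm{Stab}_{G^*}(p)=\{\varphi\in G^*:p^\varphi=p\}$. *)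

theory Defs
  imports "HOL-Combinatorics.Permutations"
begin

definition Wset :: "nat \<Rightarrow> nat set" where "Wset n = {1..n}"
definition Mset :: "nat \<Rightarrow> nat set" where "Mset n = {n+1..2*n}"
definition Iset :: "nat \<Rightarrow> nat set" where "Iset n = Wset n \<union> Mset n"

text \<open>A linear order R on X is a relation (set of pairs) with (a,b) in R meaning a is
  weakly preferred to b (a \<succeq> b).\<close>
definition profile :: "nat \<Rightarrow> (nat \<Rightarrow> (nat \<times> nat) set) \<Rightarrow> bool" where
  "profile n p \<longleftrightarrow>
     (\<forall>x\<in>Wset n. linear_order_on (Mset n) (p x)) \<and>
     (\<forall>y\<in>Mset n. linear_order_on (Wset n) (p y)) \<and>
     (\<forall>z. z \<notin> Iset n \<longrightarrow> p z = {})"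

definition Rank :: "(nat \<times> nat) set \<Rightarrow> nat \<Rightarrow> nat" where
  "Rank R a = card {b. (b, a) \<in> R}"

definition Gstar :: "nat \<Rightarrow> (nat \<Rightarrow> nat) set" where
  "Gstar n = {\<phi>. \<phi> permutes Iset n \<and> {\<phi> ` Wset n, \<phi> ` Mset n} = {Wset n, Mset n}}"

definition rel_image :: "(nat \<Rightarrow> nat) \<Rightarrow> (nat \<times> nat) set \<Rightarrow> (nat \<times> nat) set" where
  "rel_image \<phi> R = {(\<phi> a, \<phi> b) | a b. (a, b) \<in> R}"

definition prof_act :: "(nat \<Rightarrow> nat) \<Rightarrow> (nat \<Rightarrow> (nat \<times> nat) set) \<Rightarrow> (nat \<Rightarrow> (nat \<times> nat) set)" where
  "prof_act \<phi> p = (\<lambda>z. rel_image \<phi> (p (inv \<phi> z)))"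

definition Stab :: "nat \<Rightarrow> (nat \<Rightarrow> (nat \<times> nat) set) \<Rightarrow> (nat \<Rightarrow> nat) set" where
  "Stab n p = {\<phi> \<in> Gstar n. prof_act \<phi> p = p}"

definition cyclic_gen :: "(nat \<Rightarrow> nat) \<Rightarrow> (nat \<Rightarrow> nat) set" where
  "cyclic_gen \<phi> = {\<phi> ^^ k | k. True}"

definition is_2n_cycle :: "nat \<Rightarrow> (nat \<Rightarrow> nat) \<Rightarrow> bool" where
  "is_2n_cycle n \<phi> \<longleftrightarrow> \<phi> permutes Iset n \<and>
     (\<exists>z\<in>Iset n. card {(\<phi> ^^ k) z | k. True} = 2 * n)"

end

theory Submission
  imports Defs
begin

(* Seat the 2n agents around a round table, alternating between W and M, and let every agent
   rank the other side by clockwise distance, starting one seat past the diametrically opposite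
   seat, which is ranked last (it is on the other side because n is odd).  Rotations of the table
   preserve this profile, and the rotation by one seat is a 2n-cycle whose n-th power sends every
   agent to its last choice.  Conversely, a symmetry of the profile preserves the rank, hence the
   seat distance modulo 2n, between any two agents on opposite sides; as every two agents are
   joined by a path alternating between the sides, it moves all seats by the same amount and is
   a rotation. *)

definition rank_order :: "('a \<Rightarrow> nat) \<Rightarrow> 'a set \<Rightarrow> ('a \<times> 'a) set" where
  "rank_order r A = {(a, b). a \<in> A \<and> b \<in> A \<and> r a \<le> r b}"

lemma linear_order_on_rank_order:
  assumes "inj_on r A"
  shows "linear_order_on A (rank_order r A)"
proof -
  have "antisym (rank_order r A)"
    using assms by (auto simp: antisym_def rank_order_def dest: inj_onD)
  then show ?thesis
    unfolding linear_order_on_def partial_order_on_def preorder_on_def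
    by (auto simp: rank_order_def refl_on_def trans_def total_on_def)
qed

lemma Rank_rank_order:
  assumes r: "bij_betw r A {1..m}" and b: "b \<in> A"
  shows "Rank (rank_order r A) b = r b"
proof -
  have "{c. (c, b) \<in> rank_order r A} = {c \<in> A. r c \<le> r b}"
    using b by (auto simp: rank_order_def)
  moreover have "r ` {c \<in> A. r c \<le> r b} = {1..r b}"
  proof
    show "r ` {c \<in> A. r c \<le> r b} \<subseteq> {1..r b}"
      using r by (auto dest: bij_betwE)
    have "{1..r b} \<subseteq> r ` A"
      using r b by (auto simp: bij_betw_def)
    then show "{1..r b} \<subseteq> r ` {c \<in> A. r c \<le> r b}" by auto
  qed
  moreover have "inj_on r {c \<in> A. r c \<le> r b}"
    using r by (auto simp: bij_betw_def intro: inj_on_subset)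
  ultimately show ?thesis
    unfolding Rank_def by (metis card_atLeastAtMost card_image diff_Suc_1)
qed

lemma rel_image_rank_order:
  assumes "inj_on f A" and "\<And>a. a \<in> A \<Longrightarrow> r' (f a) = r a"
  shows "rel_image f (rank_order r A) = rank_order r' (f ` A)"
  using assms unfolding rel_image_def rank_order_def by (auto simp: inj_on_def) blast

lemma Rank_rel_image:
  assumes "inj f"
  shows "Rank (rel_image f R) (f a) = Rank R a"
proof -
  have "{b. (b, f a) \<in> rel_image f R} = f ` {b. (b, a) \<in> R}"
    using assms unfolding rel_image_def inj_def by auto
  then show ?thesis
    unfolding Rank_def using assms by (simp add: card_image inj_on_subset)
qed

lemma prof_act_eq_iff:
  assumes "bij \<psi>"
  shows "prof_act \<psi> p = p \<longleftrightarrow> (\<forall>w. p (\<psi> w) = rel_image \<psi> (p w))"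
proof
  assume "prof_act \<psi> p = p"
  then show "\<forall>w. p (\<psi> w) = rel_image \<psi> (p w)"
    using assms by (metis prof_act_def bij_is_inj inv_f_f)
next
  assume equivariant: "\<forall>w. p (\<psi> w) = rel_image \<psi> (p w)"
  show "prof_act \<psi> p = p"
  proof
    fix z
    have "prof_act \<psi> p z = p (\<psi> (inv \<psi> z))"
      using equivariant by (simp add: prof_act_def)
    then show "prof_act \<psi> p z = p z"
      using assms by (simp add: bij_is_surj surj_f_inv_f)
  qed
qed

(* x \<in> W sits on seat 2(x - 1) and n + j \<in> M on seat 2j - 1, so the seats are 0, ..., 2n - 1. *)
definition seat :: "nat \<Rightarrow> nat \<Rightarrow> int" where
  "seat n z = (if z \<le> n then 2 * (int z - 1) else 2 * (int z - int n) - 1)"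

definition agent_at :: "nat \<Rightarrow> int \<Rightarrow> nat" where
  "agent_at n j = nat (if even j then j div 2 + 1 else int n + j div 2 + 1)"

definition rot :: "nat \<Rightarrow> int \<Rightarrow> nat \<Rightarrow> nat" where
  "rot n s z = (if z \<in> Iset n then agent_at n ((seat n z + s) mod (2 * int n)) else z)"

lemma Iset_eq: "Iset n = {1..2 * n}"
  unfolding Iset_def Wset_def Mset_def by auto

lemma seat_range: "z \<in> Iset n \<Longrightarrow> seat n z \<in> {0..<2 * int n}"
  unfolding Iset_eq seat_def by auto

lemma agent_at_seat: "z \<in> Iset n \<Longrightarrow> agent_at n (seat n z) = z"
  unfolding Iset_eq seat_def agent_at_def by auto

lemma inj_on_seat: "inj_on (seat n) (Iset n)"
  by (metis agent_at_seat inj_onI)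

lemma seat_agent_at:
  assumes "j \<in> {0..<2 * int n}"
  shows "agent_at n j \<in> Iset n" "seat n (agent_at n j) = j"
proof -
  have "1 + 2 * (j div 2) = j" if "odd j" using that by presburger
  then show "agent_at n j \<in> Iset n" "seat n (agent_at n j) = j"
    using assms unfolding Iset_eq seat_def agent_at_def by auto
qed

lemma Wset_iff_even_seat: "z \<in> Wset n \<longleftrightarrow> z \<in> Iset n \<and> even (seat n z)"
  unfolding Iset_eq seat_def Wset_def by auto

lemma Mset_iff_odd_seat: "z \<in> Mset n \<longleftrightarrow> z \<in> Iset n \<and> odd (seat n z)"
  unfolding Iset_eq seat_def Mset_def by auto

lemma rot_in_Iset: "z \<in> Iset n \<Longrightarrow> rot n s z \<in> Iset n"
  and seat_rot: "z \<in> Iset n \<Longrightarrow> seat n (rot n s z) = (seat n z + s) mod (2 * int n)"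
proof -
  assume "z \<in> Iset n"
  then have "n > 0" by (auto simp: Iset_eq)
  then have "(seat n z + s) mod (2 * int n) \<in> {0..<2 * int n}" by simp
  then show "rot n s z \<in> Iset n" "seat n (rot n s z) = (seat n z + s) mod (2 * int n)"
    using \<open>z \<in> Iset n\<close> seat_agent_at unfolding rot_def by auto
qed

lemma seat_mod: "z \<in> Iset n \<Longrightarrow> seat n z mod (2 * int n) = seat n z"
  using seat_range by simp

lemma rot_zero: "rot n 0 = id"
  by (rule ext) (simp add: rot_def seat_mod agent_at_seat)

lemma rot_rot: "rot n s (rot n t z) = rot n (t + s) z"
proof (cases "z \<in> Iset n")
  case True
  then show ?thesis
    using rot_in_Iset[OF True] seat_rot[OF True] by (simp add: rot_def mod_simps add.assoc)
qed (simp add: rot_def)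

lemma rot_mod: "rot n (s mod (2 * int n)) = rot n s"
  by (auto simp: rot_def mod_simps)

lemma funpow_rot_one: "rot n 1 ^^ k = rot n (int k)"
  by (induction k) (auto simp: rot_zero rot_rot add.commute)

lemma rot_permutes: "rot n s permutes Iset n"
proof (rule bij_imp_permutes)
  show "bij_betw (rot n s) (Iset n) (Iset n)"
    by (rule bij_betwI[where g = "rot n (- s)"]) (auto simp: rot_in_Iset rot_rot rot_zero)
qed (simp add: rot_def)

lemma even_seat_rot:
  "z \<in> Iset n \<Longrightarrow> even (seat n (rot n s z)) \<longleftrightarrow> (even (seat n z) \<longleftrightarrow> even s)"
proof -
  have "even (x mod (2 * int n)) \<longleftrightarrow> even x" for x
    by (simp add: dvd_mod_iff)
  then show "z \<in> Iset n \<Longrightarrow> ?thesis" by (simp add: seat_rot)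
qed

lemma rot_image_seat_parity:
  "rot n s ` {z \<in> Iset n. even (seat n z) \<longleftrightarrow> P} = {z \<in> Iset n. even (seat n z) \<longleftrightarrow> (P \<longleftrightarrow> even s)}"
  (is "rot n s ` ?A = ?B")
proof
  show "rot n s ` ?A \<subseteq> ?B"
    by (auto simp: rot_in_Iset even_seat_rot)
  show "?B \<subseteq> rot n s ` ?A"
  proof
    fix y assume y: "y \<in> ?B"
    then have "y = rot n s (rot n (- s) y)"
      by (simp add: rot_rot rot_zero)
    moreover have "rot n (- s) y \<in> ?A"
      using y by (auto simp: rot_in_Iset even_seat_rot)
    ultimately show "y \<in> rot n s ` ?A"
      by blast
  qed
qed

lemma rot_in_Gstar: "rot n s \<in> Gstar n"
proof -
  have W: "Wset n = {z \<in> Iset n. even (seat n z) \<longleftrightarrow> True}"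
    and M: "Mset n = {z \<in> Iset n. even (seat n z) \<longleftrightarrow> False}"
    by (auto simp: Wset_iff_even_seat Mset_iff_odd_seat)
  show ?thesis
    using rot_image_seat_parity[of n s True] rot_image_seat_parity[of n s False] rot_permutes
    unfolding Gstar_def W M by (cases "even s") auto
qed

(* For odd n and odd d the residue (d + n - 1) mod 2n is odd, so offset_rank n is a bijection
   from the odd residues onto {1..n}: offset n + 1 gets rank 1 and offset n gets rank n. *)
definition offset_rank :: "nat \<Rightarrow> int \<Rightarrow> nat" where
  "offset_rank n d = nat ((d + (int n - 1)) mod (2 * int n) div 2 + 1)"

lemma offset_rank_mod: "offset_rank n (d mod (2 * int n)) = offset_rank n d"
  by (simp add: offset_rank_def mod_add_left_eq)

lemma offset_rank_diff_mod:
  "offset_rank n (x mod (2 * int n) - y mod (2 * int n)) = offset_rank n (x - y)"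
  by (metis mod_diff_eq offset_rank_mod)

lemma int_offset_rank:
  assumes "n > 0"
  shows "int (offset_rank n d) = (d + (int n - 1)) mod (2 * int n) div 2 + 1"
  using assms by (simp add: offset_rank_def pos_imp_zdiv_nonneg_iff)

lemma offset_rank_range:
  assumes "n > 0"
  shows "offset_rank n d \<in> {1..n}"
proof -
  define u where "u = (d + (int n - 1)) mod (2 * int n)"
  have "0 \<le> u" "u < 2 * int n"
    using assms by (simp_all add: u_def)
  then have "1 \<le> u div 2 + 1" "u div 2 + 1 \<le> int n"
    by auto
  then show ?thesis
    using int_offset_rank[OF assms, of d] by (simp flip: u_def)
qed

lemma offset_rank_self: "n > 0 \<Longrightarrow> offset_rank n (int n) = n"
  by (simp add: offset_rank_def zmod_minus1)

lemma offset_rank_eq_iff: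
  assumes "odd n" "odd d" "odd d'"
  shows "offset_rank n d = offset_rank n d' \<longleftrightarrow> d mod (2 * int n) = d' mod (2 * int n)"
proof
  assume eq: "offset_rank n d = offset_rank n d'"
  define u where "u x = (x + (int n - 1)) mod (2 * int n)" for x
  have "odd (u d)" "odd (u d')"
    using assms by (simp_all add: u_def dvd_mod_iff)
  then have "u d = 2 * (u d div 2) + 1" "u d' = 2 * (u d' div 2) + 1"
    by simp_all
  moreover have "u d div 2 = u d' div 2"
    using arg_cong[OF eq, of int] int_offset_rank[of n] assms(1) by (simp add: u_def odd_pos)
  ultimately have "u d = u d'"
    by simp
  then show "d mod (2 * int n) = d' mod (2 * int n)"
    unfolding u_def by (simp add: mod_eq_dvd_iff)
qed (metis offset_rank_mod)

definition opposite :: "nat \<Rightarrow> nat \<Rightarrow> nat set" where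
  "opposite n z = {a \<in> Iset n. even (seat n a) \<longleftrightarrow> odd (seat n z)}"

lemma opposite_eq: "z \<in> Iset n \<Longrightarrow> opposite n z = (if z \<in> Wset n then Mset n else Wset n)"
  by (auto simp: opposite_def Wset_iff_even_seat Mset_iff_odd_seat)

lemma card_opposite: "z \<in> Iset n \<Longrightarrow> card (opposite n z) = n"
  by (simp add: opposite_eq Wset_def Mset_def)

lemma rot_image_opposite: "w \<in> Iset n \<Longrightarrow> rot n s ` opposite n w = opposite n (rot n s w)"
  unfolding opposite_def rot_image_seat_parity by (auto simp: even_seat_rot)

definition table_profile :: "nat \<Rightarrow> nat \<Rightarrow> (nat \<times> nat) set" where
  "table_profile n z =
     (if z \<in> Iset n then rank_order (\<lambda>a. offset_rank n (seat n a - seat n z)) (opposite n z) else {})"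

lemma bij_betw_offset_rank_opposite:
  assumes n: "odd n" and z: "z \<in> Iset n"
  shows "bij_betw (\<lambda>a. offset_rank n (seat n a - seat n z)) (opposite n z) {1..n}"
proof -
  let ?r = "\<lambda>a. offset_rank n (seat n a - seat n z)"
  have inj: "inj_on ?r (opposite n z)"
  proof (rule inj_onI)
    fix a b assume a: "a \<in> opposite n z" and b: "b \<in> opposite n z" and "?r a = ?r b"
    then have "(seat n a - seat n z) mod (2 * int n) = (seat n b - seat n z) mod (2 * int n)"
      using n by (simp add: offset_rank_eq_iff opposite_def)
    then have "seat n a mod (2 * int n) = seat n b mod (2 * int n)"
      by (simp add: mod_eq_dvd_iff)
    moreover have "a \<in> Iset n" "b \<in> Iset n"
      using a b by (simp_all add: opposite_def)
    ultimately show "a = b"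
      by (metis seat_mod inj_on_seat inj_onD)
  qed
  moreover have "?r ` opposite n z \<subseteq> {1..n}"
    using offset_rank_range[OF odd_pos[OF n]] by auto
  moreover have "card (?r ` opposite n z) = card {1..n}"
    using card_image[OF inj] card_opposite[OF z] by simp
  ultimately show ?thesis
    by (simp add: bij_betw_def card_subset_eq)
qed

lemma Rank_table_profile:
  assumes "odd n" "z \<in> Iset n" "a \<in> opposite n z"
  shows "Rank (table_profile n z) a = offset_rank n (seat n a - seat n z)"
  using assms by (simp add: table_profile_def Rank_rank_order[OF bij_betw_offset_rank_opposite])

lemma profile_table_profile:
  assumes "odd n"
  shows "profile n (table_profile n)"
proof -
  have lin: "linear_order_on (opposite n z) (table_profile n z)" if "z \<in> Iset n" for z
    using assms that bij_betw_offset_rank_opposite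
    by (simp add: table_profile_def linear_order_on_rank_order bij_betw_def)
  have "Wset n \<inter> Mset n = {}"
    by (auto simp: Wset_def Mset_def)
  show ?thesis
    unfolding profile_def
  proof (intro conjI ballI allI impI)
    fix x assume "x \<in> Wset n"
    then show "linear_order_on (Mset n) (table_profile n x)"
      using lin[of x] opposite_eq[of x n] by (simp add: Iset_def)
  next
    fix y assume "y \<in> Mset n"
    moreover from this have "y \<notin> Wset n"
      using \<open>Wset n \<inter> Mset n = {}\<close> by blast
    ultimately show "linear_order_on (Wset n) (table_profile n y)"
      using lin[of y] opposite_eq[of y n] by (simp add: Iset_def)
  next
    fix z assume "z \<notin> Iset n"
    then show "table_profile n z = {}" by (simp add: table_profile_def)
  qed
qed

lemma table_profile_rot:
  "table_profile n (rot n s w) = rel_image (rot n s) (table_profile n w)"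
proof (cases "w \<in> Iset n")
  case True
  have compat: "offset_rank n (seat n (rot n s a) - seat n (rot n s w)) = offset_rank n (seat n a - seat n w)"
    if "a \<in> opposite n w" for a
    using that True offset_rank_diff_mod[of n "seat n a + s" "seat n w + s"]
    by (simp add: opposite_def seat_rot)
  have inj: "inj_on (rot n s) (opposite n w)"
    using permutes_inj[OF rot_permutes] by (auto intro: inj_on_subset)
  have "rel_image (rot n s) (rank_order (\<lambda>a. offset_rank n (seat n a - seat n w)) (opposite n w))
    = rank_order (\<lambda>a. offset_rank n (seat n a - seat n (rot n s w))) (rot n s ` opposite n w)"
    by (rule rel_image_rank_order[OF inj]) (rule compat)
  then show ?thesis
    using True by (simp add: table_profile_def rot_in_Iset rot_image_opposite)
qed (simp add: table_profile_def rot_def rel_image_def)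

lemma rot_stabilises_table_profile: "prof_act (rot n s) (table_profile n) = table_profile n"
  using prof_act_eq_iff[OF permutes_bij[OF rot_permutes]] table_profile_rot by blast

lemma seat_shift_cong_opposite:
  assumes n: "odd n" and "inj \<psi>"
    and \<psi>: "\<And>w. table_profile n (\<psi> w) = rel_image \<psi> (table_profile n w)"
    and w: "w \<in> Iset n" and a: "a \<in> opposite n w"
  shows "(seat n (\<psi> a) - seat n a) mod (2 * int n) = (seat n (\<psi> w) - seat n w) mod (2 * int n)"
proof -
  have "(a, a) \<in> table_profile n w"
    using w a by (simp add: table_profile_def rank_order_def)
  then have "(\<psi> a, \<psi> a) \<in> table_profile n (\<psi> w)"
    unfolding \<psi> rel_image_def by blast
  then have \<psi>w: "\<psi> w \<in> Iset n" and \<psi>a: "\<psi> a \<in> opposite n (\<psi> w)"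
    by (auto simp: table_profile_def rank_order_def split: if_splits)
  have "offset_rank n (seat n (\<psi> a) - seat n (\<psi> w)) = Rank (table_profile n (\<psi> w)) (\<psi> a)"
    using Rank_table_profile[OF n \<psi>w \<psi>a] by simp
  also have "\<dots> = Rank (table_profile n w) a"
    by (simp add: \<psi> Rank_rel_image[OF \<open>inj \<psi>\<close>])
  also have "\<dots> = offset_rank n (seat n a - seat n w)"
    by (rule Rank_table_profile[OF n w a])
  finally have "(seat n (\<psi> a) - seat n (\<psi> w)) mod (2 * int n) = (seat n a - seat n w) mod (2 * int n)"
    using n \<psi>a a by (simp add: offset_rank_eq_iff opposite_def)
  then show ?thesis
    by (simp add: mod_eq_dvd_iff algebra_simps)
qed

lemma seat_shift_const:
  assumes n: "odd n" and "inj \<psi>"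
    and \<psi>: "\<And>w. table_profile n (\<psi> w) = rel_image \<psi> (table_profile n w)"
    and z: "z \<in> Iset n"
  shows "(seat n (\<psi> z) - seat n z) mod (2 * int n) = (seat n (\<psi> 1) - seat n 1) mod (2 * int n)"
proof -
  note shift = seat_shift_cong_opposite[OF n \<open>inj \<psi>\<close> \<psi>]
  have "1 \<in> Wset n" "n + 1 \<in> Mset n"
    using odd_pos[OF n] by (simp_all add: Wset_def Mset_def)
  then have one: "1 \<in> Iset n" and opp_one: "opposite n 1 = Mset n" and "n + 1 \<in> opposite n 1"
    by (simp_all add: Iset_def opposite_eq)
  show ?thesis
  proof (cases "z \<in> Wset n")
    case True
    then have "n + 1 \<in> opposite n z"
      using z \<open>n + 1 \<in> Mset n\<close> by (simp add: opposite_eq)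
    then show ?thesis
      using shift[OF z] shift[OF one \<open>n + 1 \<in> opposite n 1\<close>] by simp
  next
    case False
    then have "z \<in> opposite n 1"
      using z opp_one by (simp add: Iset_def)
    then show ?thesis
      using shift[OF one] by simp
  qed
qed

lemma eq_rot_if_seat_shift_const:
  assumes \<psi>: "\<psi> permutes Iset n"
    and shift: "\<And>z. z \<in> Iset n \<Longrightarrow> (seat n (\<psi> z) - seat n z) mod (2 * int n) = s mod (2 * int n)"
  shows "\<psi> = rot n s"
proof
  fix z
  show "\<psi> z = rot n s z"
  proof (cases "z \<in> Iset n")
    case True
    have "\<psi> z \<in> Iset n"
      using \<psi> True by (simp add: permutes_in_image)
    moreover have "seat n (\<psi> z) mod (2 * int n) = (seat n z + s) mod (2 * int n)"
      using shift[OF True] by (simp add: mod_eq_dvd_iff algebra_simps)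
    ultimately have "seat n (\<psi> z) = seat n (rot n s z)"
      using True by (simp add: seat_mod seat_rot)
    then show ?thesis
      using True \<open>\<psi> z \<in> Iset n\<close> rot_in_Iset inj_on_seat by (metis inj_onD)
  next
    case False
    then show ?thesis
      using \<psi> by (simp add: permutes_not_in rot_def)
  qed
qed

lemma stabiliser_table_profile_eq_rot:
  assumes "odd n" and \<psi>: "\<psi> permutes Iset n" and "prof_act \<psi> (table_profile n) = table_profile n"
  shows "\<psi> = rot n (seat n (\<psi> 1) - seat n 1)"
proof -
  have "\<And>w. table_profile n (\<psi> w) = rel_image \<psi> (table_profile n w)"
    using assms(3) prof_act_eq_iff[OF permutes_bij[OF \<psi>]] by blast
  then show ?thesis
    using eq_rot_if_seat_shift_const[OF \<psi>] seat_shift_const[OF \<open>odd n\<close> permutes_inj[OF \<psi>]]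
    by blast
qed

lemma Rank_table_profile_rot:
  assumes n: "odd n" and z: "z \<in> Iset n" and "odd s"
  shows "Rank (table_profile n z) (rot n s z) = offset_rank n s"
proof -
  have "rot n s z \<in> opposite n z"
    using z \<open>odd s\<close> by (simp add: opposite_def rot_in_Iset even_seat_rot)
  then have "Rank (table_profile n z) (rot n s z) = offset_rank n (seat n (rot n s z) - seat n z)"
    by (rule Rank_table_profile[OF n z])
  also have "\<dots> = offset_rank n s"
    using z offset_rank_diff_mod[of n "seat n z + s" "seat n z"] by (simp add: seat_rot seat_mod)
  finally show ?thesis .
qed

lemma orbit_rot_one:
  assumes "n > 0"
  shows "{(rot n 1 ^^ k) 1 | k. True} = Iset n"
proof
  have one: "1 \<in> Iset n" and "seat n 1 = 0"
    using assms by (simp_all add: Iset_eq seat_def)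
  then show "{(rot n 1 ^^ k) 1 | k. True} \<subseteq> Iset n"
    by (auto simp: funpow_rot_one rot_in_Iset)
  show "Iset n \<subseteq> {(rot n 1 ^^ k) 1 | k. True}"
  proof
    fix z assume z: "z \<in> Iset n"
    then have "z = rot n (seat n z) 1"
      using one \<open>seat n 1 = 0\<close> by (simp add: rot_def seat_mod agent_at_seat)
    also have "\<dots> = (rot n 1 ^^ nat (seat n z)) 1"
      using seat_range[OF z] by (simp add: funpow_rot_one)
    finally show "z \<in> {(rot n 1 ^^ k) 1 | k. True}" by blast
  qed
qed

lemma is_2n_cycle_rot_one:
  assumes "n > 0"
  shows "is_2n_cycle n (rot n 1)"
proof -
  have "1 \<in> Iset n" "card (Iset n) = 2 * n"
    using assms by (simp_all add: Iset_eq)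
  then show ?thesis
    unfolding is_2n_cycle_def using rot_permutes orbit_rot_one[OF assms] by metis
qed

lemma Stab_table_profile:
  assumes "odd n"
  shows "Stab n (table_profile n) = cyclic_gen (rot n 1)"
proof
  show "Stab n (table_profile n) \<subseteq> cyclic_gen (rot n 1)"
  proof
    fix \<psi> assume "\<psi> \<in> Stab n (table_profile n)"
    then obtain s where "\<psi> = rot n s"
      using stabiliser_table_profile_eq_rot[OF assms] by (auto simp: Stab_def Gstar_def)
    also have "\<dots> = rot n 1 ^^ nat (s mod (2 * int n))"
      using odd_pos[OF assms] by (simp add: funpow_rot_one rot_mod)
    finally show "\<psi> \<in> cyclic_gen (rot n 1)"
      by (auto simp: cyclic_gen_def)
  qed
  show "cyclic_gen (rot n 1) \<subseteq> Stab n (table_profile n)"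
    by (auto simp: cyclic_gen_def Stab_def funpow_rot_one rot_in_Gstar rot_stabilises_table_profile)
qed

theorem proposition17:
  fixes n :: nat
  assumes "n \<ge> 2" and "odd n"
  shows "\<exists>p \<phi>. profile n p \<and> \<phi> \<in> Gstar n \<and> is_2n_cycle n \<phi> \<and>
           Stab n p = cyclic_gen \<phi> \<and>
           (\<forall>z\<in>Iset n. Rank (p z) ((\<phi> ^^ n) z) = n)"
proof (intro exI conjI)
  have "n > 0"
    using assms by simp
  show "profile n (table_profile n)"
    using profile_table_profile[OF \<open>odd n\<close>] .
  show "rot n 1 \<in> Gstar n"
    by (rule rot_in_Gstar)
  show "is_2n_cycle n (rot n 1)"
    using is_2n_cycle_rot_one[OF \<open>n > 0\<close>] .
  show "Stab n (table_profile n) = cyclic_gen (rot n 1)"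
    using Stab_table_profile[OF \<open>odd n\<close>] .
  show "\<forall>z\<in>Iset n. Rank (table_profile n z) ((rot n 1 ^^ n) z) = n"
    using assms Rank_table_profile_rot offset_rank_self[OF \<open>n > 0\<close>] by (simp add: funpow_rot_one)
qed

end
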